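(* Let $(M^3,g)$ be a Riemannian $3$-manifold with Ricci tensor $R_{ij}$ and scalar curvature $R$, and let $h$ be a symmetric $2$-tensor on $M$ with trace $H=g^{ij}h_{ij}$. Then at every point \[ |h|^2|\mathrm{Rc}|^2-2RH\,\mathrm{Rc}\cdot h+2R\,\mathrm{Rc}\cdot h^2+\tfrac12R^2\left(H^2-|h|^2\right)\geq0, \] where $\mathrm{Rc}\cdot h=R_{ij}h_{ij}$ and $\mathrm{Rc}\cdot h^2=R_{ij}h_{ik}h_{kj}$ (contractions with respect to $g$).
   Context: Norms and contractions are taken with respect to $g$ (orthonormal frame, repeated indices summed). *)

theory Defs
  imports "HOL-Analysis.Analysis"
begin

text \<open>Pointwise tensors in an orthonormal frame of the tangent space at a point
of a Riemannian 3-manifold are represented as 3x3 real matrices.\<close>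
definition contr :: "real^3^3 \<Rightarrow> real^3^3 \<Rightarrow> real" where
  "contr A B = (\<Sum>i\<in>UNIV. \<Sum>j\<in>UNIV. A $ i $ j * B $ i $ j)"

definition tnormsq :: "real^3^3 \<Rightarrow> real" where
  "tnormsq A = contr A A"

end

theory Submission
  imports Defs
begin

(* In dimension three the quartic form is a sum of squares: with the Einstein tensor
   G = Rc - (R/2) g and X\<degree> the traceless part of X, it equals
   2 |(G h)\<degree>|^2 + |(Rc h + h Rc - H Rc)\<degree>|^2.
   This is a polynomial identity in the six independent entries of each of Rc and h,
   checked by expansion; it is special to dimension three (it fails for 4x4 matrices). *)

definition einstein_tensor :: "real^'n^'n \<Rightarrow> real^'n^'n" where
  "einstein_tensor Rc = Rc - (trace Rc / 2) *\<^sub>R mat 1"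

definition traceless :: "real^'n^'n \<Rightarrow> real^'n^'n" where
  "traceless A = A - (trace A / real CARD('n)) *\<^sub>R mat 1"

lemma tnormsq_nonneg: "tnormsq A \<ge> 0"
  unfolding tnormsq_def contr_def by (intro sum_nonneg) simp

lemma tnormsq_traceless: "tnormsq (traceless A) = tnormsq A - (trace A)\<^sup>2 / 3"
  unfolding tnormsq_def contr_def traceless_def trace_def
  by (simp add: sum_3 mat_def field_simps power2_eq_square)

lemma symmetric_matrix3_nth:
  fixes A :: "'a^3^3"
  assumes "transpose A = A"
  shows "A $ 2 $ 1 = A $ 1 $ 2" "A $ 3 $ 1 = A $ 1 $ 3" "A $ 3 $ 2 = A $ 2 $ 3"
  using assms by (simp_all add: transpose_def vec_eq_iff)

lemma quartic_eq_sum_of_squares: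
  fixes Rc h :: "real^3^3"
  assumes "transpose Rc = Rc" and "transpose h = h"
  shows "tnormsq h * tnormsq Rc - 2 * trace Rc * trace h * contr Rc h
         + 2 * trace Rc * contr Rc (h ** h)
         + (1/2) * (trace Rc)^2 * ((trace h)^2 - tnormsq h)
       = 2 * tnormsq (traceless (einstein_tensor Rc ** h))
         + tnormsq (traceless (Rc ** h + h ** Rc - trace h *\<^sub>R Rc))"
  unfolding tnormsq_traceless
  unfolding contr_def einstein_tensor_def tnormsq_def trace_def matrix_matrix_mult_def
  by (simp add: sum_3 mat_def symmetric_matrix3_nth[OF assms(1)] symmetric_matrix3_nth[OF assms(2)],
      simp add: field_simps, algebra)

theorem lemma3:
  fixes Rc h :: "real^3^3"
  assumes "transpose Rc = Rc" and "transpose h = h"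
  shows "tnormsq h * tnormsq Rc - 2 * trace Rc * trace h * contr Rc h
         + 2 * trace Rc * contr Rc (h ** h)
         + (1/2) * (trace Rc)^2 * ((trace h)^2 - tnormsq h) \<ge> 0"
  unfolding quartic_eq_sum_of_squares[OF assms] by (simp add: tnormsq_nonneg)

end
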